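(* Assume (A1), (A2), (A3) and $n\ge 3$. Let $\delta\in(0,1)$, $\beta>0$, and $\mathcal R=\{r_1,\dots,r_m\}$ with positive integers $r_1<\dots<r_m$, and run the algorithm ADAPT described in the context at a time $t\ge r_1$. Let $\hat{\bm C}$ be the matrix selected by ADAPT (i.e. $\hat{\bm C}=\hat{\bm C}^{[r_k]}(t)$ for the final value of $k$). Then with probability at least $1-\delta$, $$\lVert\hat{\bm C}-\bm C(t)\rVert_\infty\le\Phi_{\mathcal R,\beta}\min_{r\in\mathbb{Z},\ r_1\le r\le\min(t,r_m)}\left(\frac{A_{\delta,n,m}}{\sqrt r}+\sum_{u=t-r+1}^{t-1}\lVert\bm C(u)-\bm C(u+1)\rVert_\infty\right),$$ where $A_{\delta,n,m}=\sqrt{2\ln[(2m-1)n(n-1)/\delta]}$, $\gamma_M=\max_{k}\sqrt{r_k/r_{k+1}}$, $\gamma_m=\min_k\sqrt{r_k/r_{k+1}}$ ($1\le k\le m-1$), and $\Phi_{\mathcal R,\beta}=1+\max\left\{\frac{2\beta+2}{\gamma_m(1-\gamma_M)},\frac{2\beta+2}{\beta(1-\gamma_M)}\right\}$.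
   Context: Norms: $\lVert\bm M\rVert_\infty=\max_{i,j}|M_{ij}|$. Setting: $\mathcal X=\mathbb{R}^d$, true labeling $y:\mathcal X\to\{-1,1\}$, weak labelers $\ell_1,\dots,\ell_n:\mathcal X\to\{-1,1\}$, inputs $X_k\sim D_k$. (A1): for every finite $t$, $(X_1,\dots,X_t)\sim\prod_{k=1}^tD_k$. (A2): for every $t$ and $i\ne j$, with $X_t\sim D_t$, the events $\{\ell_i(X_t)\ne y(X_t)\}$, $\{\ell_j(X_t)\ne y(X_t)\}$ are independent conditionally on $y(X_t)$. (A3): there is $\tau>0$ with $\Pr_{X\sim D_t}(\ell_i(X)=y(X))\ge\frac12+\tau$ for all $t,i$. Correlation matrix $C_{ij}(k)=\mathbb{E}_{X\sim D_k}[\ell_i(X)\ell_j(X)]$; empirical correlation matrix $\hat{\bm C}^{[r]}(t)=\frac1r\sum_{k=t-r+1}^t\bm v_k\bm v_k^T$ with $\bm v_k=(\ell_1(X_k),\dots,\ell_n(X_k))^T$. Algorithm ADAPT (window-selection part): set $A=A_{\delta,n,m}$, $k=1$. While $k\le m-1$ and $r_{k+1}\le t$: if $\lVert\hat{\bm C}^{[r_{k+1}]}(t)-\hat{\bm C}^{[r_k]}(t)\rVert_\infty\le A\left[\frac{2\beta}{\sqrt{r_k}}+\sqrt{\frac{1-r_k/r_{k+1}}{r_k}}\right]$ set $k\leftarrow k+1$, otherwise stop the loop. The selected matrix is $\hat{\bm C}=\hat{\bm C}^{[r_k]}(t)$. *)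

theory Defs
  imports "HOL-Probability.Probability"
begin

text \<open>Matrices indexed by 1..n are represented as functions nat => nat => real;
  the max-norm takes the maximum absolute entry over i, j in 1..n.\<close>
definition maxnorm :: "nat \<Rightarrow> (nat \<Rightarrow> nat \<Rightarrow> real) \<Rightarrow> real" where
  "maxnorm n M = Max {\<bar>M i j\<bar> | i j. i \<in> {1..n} \<and> j \<in> {1..n}}"

definition corr_mat ::
  "(nat \<Rightarrow> 'x \<Rightarrow> real) \<Rightarrow> (nat \<Rightarrow> 'x measure) \<Rightarrow> nat \<Rightarrow> nat \<Rightarrow> nat \<Rightarrow> real" where
  "corr_mat ell D k i j = (\<integral>x. ell i x * ell j x \<partial>(D k))"

text \<open>Empirical correlation matrix with window r at time t (requires r \<le> t).\<close>
definition emp_corr ::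
  "(nat \<Rightarrow> 'x \<Rightarrow> real) \<Rightarrow> (nat \<Rightarrow> 'm \<Rightarrow> 'x) \<Rightarrow> nat \<Rightarrow> nat \<Rightarrow> 'm \<Rightarrow> nat \<Rightarrow> nat \<Rightarrow> real" where
  "emp_corr ell X r t \<omega> i j =
     (1 / real r) * (\<Sum>k = t - r + 1..t. ell i (X k \<omega>) * ell j (X k \<omega>))"

definition A_const :: "real \<Rightarrow> nat \<Rightarrow> nat \<Rightarrow> real" where
  "A_const \<delta> n m = sqrt (2 * ln ((2 * real m - 1) * real n * (real n - 1) / \<delta>))"

function adapt_loop :: "(nat \<Rightarrow> bool) \<Rightarrow> nat \<Rightarrow> nat \<Rightarrow> nat" where
  "adapt_loop goon m k = (if k \<le> m - 1 \<and> goon k then adapt_loop goon m (k + 1) else k)"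
  by pat_completeness auto
termination by (relation "Wellfounded.measure (\<lambda>(g, m, k). Suc m - k)") auto

definition adapt_test ::
  "(nat \<Rightarrow> 'x \<Rightarrow> real) \<Rightarrow> (nat \<Rightarrow> 'm \<Rightarrow> 'x) \<Rightarrow> nat \<Rightarrow> (nat \<Rightarrow> nat) \<Rightarrow> real \<Rightarrow> real
     \<Rightarrow> nat \<Rightarrow> 'm \<Rightarrow> nat \<Rightarrow> bool" where
  "adapt_test ell X n r A \<beta> t \<omega> k =
     (r (k + 1) \<le> t \<and>
      maxnorm n (\<lambda>i j. emp_corr ell X (r (k + 1)) t \<omega> i j - emp_corr ell X (r k) t \<omega> i j)
        \<le> A * (2 * \<beta> / sqrt (real (r k))
               + sqrt ((1 - real (r k) / real (r (k + 1))) / real (r k))))"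

definition adapt_index ::
  "(nat \<Rightarrow> 'x \<Rightarrow> real) \<Rightarrow> (nat \<Rightarrow> 'm \<Rightarrow> 'x) \<Rightarrow> nat \<Rightarrow> (nat \<Rightarrow> nat) \<Rightarrow> nat \<Rightarrow> real \<Rightarrow> real
     \<Rightarrow> nat \<Rightarrow> 'm \<Rightarrow> nat" where
  "adapt_index ell X n r m \<delta> \<beta> t \<omega> =
     adapt_loop (adapt_test ell X n r (A_const \<delta> n m) \<beta> t \<omega>) m 1"

definition adapt_matrix ::
  "(nat \<Rightarrow> 'x \<Rightarrow> real) \<Rightarrow> (nat \<Rightarrow> 'm \<Rightarrow> 'x) \<Rightarrow> nat \<Rightarrow> (nat \<Rightarrow> nat) \<Rightarrow> nat \<Rightarrow> real \<Rightarrow> real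
     \<Rightarrow> nat \<Rightarrow> 'm \<Rightarrow> nat \<Rightarrow> nat \<Rightarrow> real" where
  "adapt_matrix ell X n r m \<delta> \<beta> t \<omega> =
     emp_corr ell X (r (adapt_index ell X n r m \<delta> \<beta> t \<omega>)) t \<omega>"

definition gamma_max :: "(nat \<Rightarrow> nat) \<Rightarrow> nat \<Rightarrow> real" where
  "gamma_max r m = Max ((\<lambda>k. sqrt (real (r k) / real (r (k + 1)))) ` {1..m - 1})"

definition gamma_min :: "(nat \<Rightarrow> nat) \<Rightarrow> nat \<Rightarrow> real" where
  "gamma_min r m = Min ((\<lambda>k. sqrt (real (r k) / real (r (k + 1)))) ` {1..m - 1})"

definition Phi :: "(nat \<Rightarrow> nat) \<Rightarrow> nat \<Rightarrow> real \<Rightarrow> real" where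
  "Phi r m \<beta> = 1 + max ((2 * \<beta> + 2) / (gamma_min r m * (1 - gamma_max r m)))
                         ((2 * \<beta> + 2) / (\<beta> * (1 - gamma_max r m)))"

end

theory Submission
  imports Defs "HOL-Library.Function_Algebras"
begin

text \<open>
  Outside an event of probability at most delta, every window average of the products
  ell i (X u) * ell j (X u), and every difference of two consecutive window averages, deviates
  from its mean by at most A_const delta n m times its standard deviation: this is Hoeffding's
  inequality for each of the 2 m - 1 weight vectors and each off-diagonal entry, taken one-sided in
  both directions, and a union bound over (2 m - 1) n (n - 1) events.

  On that event the argument is deterministic and works in any group seminorm. Let r_s be the
  largest grid window not exceeding r. If ADAPT stops before r_s, its failed test forces the noise
  level A / sqrt r_k below drift / beta. Otherwise all tests from r_s up to the selected window
  passed; as 1 / sqrt r_k decays geometrically with ratio gamma_max, the estimates move by at most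
  a geometric series, and the estimate at r_s is within A / (gamma_min sqrt r) plus the drift
  of C(t).
\<close>

section \<open>Group seminorms and the max-norm\<close>

lemma sum_le_geometric:
  fixes x :: "nat \<Rightarrow> real"
  assumes "a \<le> b" and "0 \<le> g" "g < 1" and x_nonneg: "\<And>k. 0 \<le> x k"
    and decay: "\<And>k. a \<le> k \<Longrightarrow> k < b \<Longrightarrow> x (Suc k) \<le> g * x k"
  shows "(\<Sum>k = a..<b. x k) \<le> x a / (1 - g)"
  using \<open>a \<le> b\<close>
proof (induction a rule: inc_induct)
  case base
  show ?case using x_nonneg \<open>g < 1\<close> by simp
next
  case (step k)
  have "(\<Sum>k = k..<b. x k) = x k + (\<Sum>k = Suc k..<b. x k)"
    using step.hyps by (simp add: sum.atLeast_Suc_lessThan)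
  also have "\<dots> \<le> x k + g * x k / (1 - g)"
  proof -
    have "x (Suc k) / (1 - g) \<le> g * x k / (1 - g)"
      using decay[OF step.hyps] \<open>g < 1\<close> by (intro divide_right_mono) auto
    then show ?thesis using step.IH by simp
  qed
  also have "\<dots> = x k / (1 - g)"
    using \<open>g < 1\<close> by (simp add: field_simps)
  finally show ?case .
qed

locale group_seminorm =
  fixes N :: "'a::ab_group_add \<Rightarrow> real"
  assumes zero [simp]: "N 0 = 0"
    and triangle: "N (x + y) \<le> N x + N y"
    and minus: "N (- x) = N x"
begin

lemma nonneg: "0 \<le> N x"
  using triangle[of x "- x"] by (simp add: minus)

lemma minus_commute: "N (x - y) = N (y - x)"
  using minus[of "x - y"] by simp

lemma triangle_diff: "N (x - z) \<le> N (x - y) + N (y - z)"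
  using triangle[of "x - y" "y - z"] by simp

lemma telescoping: "a \<le> b \<Longrightarrow> N (f a - f b) \<le> (\<Sum>k = a..<b. N (f k - f (Suc k)))"
proof (induction b rule: dec_induct)
  case (step b)
  have "N (f a - f (Suc b)) \<le> N (f a - f b) + N (f b - f (Suc b))"
    by (rule triangle_diff)
  then show ?case using step by simp
qed simp

lemma geometric_telescoping:
  fixes x :: "nat \<Rightarrow> real"
  assumes "a \<le> b" and "0 \<le> g" "g < 1" "0 \<le> c" and "\<And>k. 0 \<le> x k"
    and step: "\<And>k. a \<le> k \<Longrightarrow> k < b \<Longrightarrow> N (f (Suc k) - f k) \<le> c * x k"
    and decay: "\<And>k. a \<le> k \<Longrightarrow> k < b \<Longrightarrow> x (Suc k) \<le> g * x k"
  shows "N (f b - f a) \<le> c * x a / (1 - g)"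
proof -
  have "N (f b - f a) \<le> (\<Sum>k = a..<b. N (f (Suc k) - f k))"
    using telescoping[OF \<open>a \<le> b\<close>, of f] by (simp add: minus_commute)
  also have "\<dots> \<le> (\<Sum>k = a..<b. c * x k)"
    by (rule sum_mono) (use step in auto)
  also have "\<dots> \<le> c * (x a / (1 - g))"
    unfolding sum_distrib_left[symmetric]
    using sum_le_geometric[of a b g x, OF assms(1-3,5) decay] \<open>0 \<le> c\<close> by (rule mult_left_mono)
  finally show ?thesis by simp
qed

end

lemma maxnorm_eq_Max_image:
  "maxnorm n F = Max ((\<lambda>p. \<bar>F (fst p) (snd p)\<bar>) ` ({1..n} \<times> {1..n}))"
  unfolding maxnorm_def by (rule arg_cong[where f = Max]) force

lemma abs_le_maxnorm: "i \<in> {1..n} \<Longrightarrow> j \<in> {1..n} \<Longrightarrow> \<bar>F i j\<bar> \<le> maxnorm n F"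
  unfolding maxnorm_eq_Max_image by (rule Max_ge) (auto intro!: image_eqI[where x = "(i, j)"])

lemma maxnorm_le_iff:
  "1 \<le> n \<Longrightarrow> maxnorm n F \<le> c \<longleftrightarrow> (\<forall>i\<in>{1..n}. \<forall>j\<in>{1..n}. \<bar>F i j\<bar> \<le> c)"
  unfolding maxnorm_eq_Max_image by (subst Max_le_iff) auto

lemma maxnorm_minus: "maxnorm n (F - G) = maxnorm n (\<lambda>i j. F i j - G i j)"
  by (simp add: fun_diff_def)

lemma group_seminorm_maxnorm:
  assumes "1 \<le> n"
  shows "group_seminorm (maxnorm n :: (nat \<Rightarrow> nat \<Rightarrow> real) \<Rightarrow> real)"
proof
  have "maxnorm n 0 \<le> 0"
    using assms by (simp add: maxnorm_le_iff)
  moreover have "\<bar>(0 :: nat \<Rightarrow> nat \<Rightarrow> real) 1 1\<bar> \<le> maxnorm n 0"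
    using assms by (intro abs_le_maxnorm) auto
  ultimately show "maxnorm n 0 = 0"
    by simp
  show "maxnorm n (F + G) \<le> maxnorm n F + maxnorm n G" for F G :: "nat \<Rightarrow> nat \<Rightarrow> real"
    unfolding maxnorm_le_iff[OF assms]
  proof (intro ballI)
    fix i j assume "i \<in> {1..n}" "j \<in> {1..n}"
    then have "\<bar>F i j\<bar> \<le> maxnorm n F" "\<bar>G i j\<bar> \<le> maxnorm n G"
      by (simp_all add: abs_le_maxnorm)
    then show "\<bar>(F + G) i j\<bar> \<le> maxnorm n F + maxnorm n G"
      using abs_triangle_ineq[of "F i j" "G i j"] by simp
  qed
  show "maxnorm n (- F) = maxnorm n F" for F :: "nat \<Rightarrow> nat \<Rightarrow> real"
    by (simp add: maxnorm_def fun_Compl_def)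
qed

lemma borel_measurable_maxnorm:
  assumes "\<And>i j. i \<in> {1..n} \<Longrightarrow> j \<in> {1..n} \<Longrightarrow> (\<lambda>\<omega>. F \<omega> i j) \<in> borel_measurable M"
  shows "(\<lambda>\<omega>. maxnorm n (F \<omega>)) \<in> borel_measurable M"
  unfolding maxnorm_eq_Max_image
  by (rule borel_measurable_Max[where f = "\<lambda>p \<omega>. \<bar>F \<omega> (fst p) (snd p)\<bar>"])
     (use assms in \<open>auto intro!: borel_measurable_abs\<close>)

section \<open>The oracle inequality for the window selection\<close>

lemma (in group_seminorm) early_stop_error:
  assumes "\<beta> > 0"
    and stopped: "N (Ch1 - Ch0) > A * (2 * \<beta> / s + v)"
    and noise_step: "N ((Ch1 - Ch0) - (Cb1 - Cb0)) \<le> A * v"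
    and noise: "N (Ch0 - Cb0) \<le> A / s"
    and bias: "N (Cb1 - C) \<le> B" "N (Cb0 - C) \<le> B"
  shows "N (Ch0 - C) \<le> (1 + 1 / \<beta>) * B"
proof -
  have "N (Ch1 - Ch0) \<le> N ((Ch1 - Ch0) - (Cb1 - Cb0)) + N (Cb1 - Cb0)"
    using triangle_diff[where x="Ch1 - Ch0" and y="Cb1 - Cb0" and z=0] by simp
  also have "N (Cb1 - Cb0) \<le> N (Cb1 - C) + N (C - Cb0)"
    by (rule triangle_diff)
  finally have "A * (2 * \<beta> / s + v) < A * v + 2 * B"
    using stopped noise_step bias by (simp add: minus_commute[of C])
  moreover have "A * (2 * \<beta> / s + v) = 2 * (\<beta> * (A / s)) + A * v"
    by (simp add: algebra_simps)
  ultimately have "\<beta> * (A / s) < B"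
    by linarith
  then have "A / s < B / \<beta>"
    using \<open>\<beta> > 0\<close> by (simp add: pos_less_divide_eq mult.commute)
  moreover have "N (Ch0 - C) \<le> N (Ch0 - Cb0) + N (Cb0 - C)"
    by (rule triangle_diff)
  ultimately show ?thesis
    using noise bias \<open>\<beta> > 0\<close> by (simp add: distrib_right)
qed

lemma sqrt_step_deviation_le: "sqrt ((1 - real a / real b) / real a) \<le> 1 / sqrt (real a)"
proof -
  have "(1 - real a / real b) / real a \<le> 1 / real a"
    by (intro divide_right_mono) auto
  then show ?thesis
    by (metis real_sqrt_divide real_sqrt_le_mono real_sqrt_one)
qed

locale window_grid =
  fixes r :: "nat \<Rightarrow> nat" and m :: nat
  assumes two_le_m: "2 \<le> m" and r_pos: "0 < r 1"
    and r_step: "\<And>k. k \<in> {1..<m} \<Longrightarrow> r k < r (k + 1)"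
begin

lemma r_less: "1 \<le> a \<Longrightarrow> a < b \<Longrightarrow> b \<le> m \<Longrightarrow> r a < r b"
  by (rule lift_Suc_mono_less_ivl[where N = "{1..<m}"]) (use r_step in auto)

lemma r_mono: "1 \<le> a \<Longrightarrow> a \<le> b \<Longrightarrow> b \<le> m \<Longrightarrow> r a \<le> r b"
  using r_less[of a b] by (cases "a = b") auto

lemma r_positive: "k \<in> {1..m} \<Longrightarrow> 0 < r k"
  using r_mono[of 1 k] r_pos by auto

lemma step_ratio_le_gamma_max:
  "k \<in> {1..<m} \<Longrightarrow> sqrt (real (r k) / real (r (k + 1))) \<le> gamma_max r m"
  unfolding gamma_max_def by (rule Max_ge) auto

lemma gamma_min_le_step_ratio:
  "k \<in> {1..<m} \<Longrightarrow> gamma_min r m \<le> sqrt (real (r k) / real (r (k + 1)))"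
  unfolding gamma_min_def by (rule Min_le) auto

lemma step_ratio_bounds:
  assumes "k \<in> {1..<m}"
  shows "0 < sqrt (real (r k) / real (r (k + 1)))" "sqrt (real (r k) / real (r (k + 1))) < 1"
  using r_positive[of k] r_step[OF assms] assms by auto

lemma gamma_max_less_1: "gamma_max r m < 1"
proof -
  have "gamma_max r m \<in> (\<lambda>k. sqrt (real (r k) / real (r (k + 1)))) ` {1..m - 1}"
    unfolding gamma_max_def using two_le_m by (intro Max_in) auto
  then show ?thesis
    using step_ratio_bounds(2) by auto
qed

lemma gamma_min_pos: "0 < gamma_min r m"
proof -
  have "gamma_min r m \<in> (\<lambda>k. sqrt (real (r k) / real (r (k + 1)))) ` {1..m - 1}"
    unfolding gamma_min_def using two_le_m by (intro Min_in) auto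
  then show ?thesis
    using step_ratio_bounds(1) by auto
qed

lemma one_in_steps: "1 \<in> {1..<m}"
  using two_le_m by simp

lemma gamma_max_nonneg: "0 \<le> gamma_max r m"
  using step_ratio_bounds(1)[OF one_in_steps] step_ratio_le_gamma_max[OF one_in_steps] by linarith

lemma gamma_min_le_1: "gamma_min r m \<le> 1"
  using gamma_min_le_step_ratio[OF one_in_steps] step_ratio_bounds(2)[OF one_in_steps] by linarith

lemma inverse_sqrt_step: 
  assumes "k \<in> {1..<m}"
  shows "1 / sqrt (real (r (k + 1))) \<le> gamma_max r m * (1 / sqrt (real (r k)))"
proof -
  have "1 / sqrt (real (r (k + 1))) = sqrt (real (r k) / real (r (k + 1))) * (1 / sqrt (real (r k)))"
    using r_positive[of k] assms by (simp add: real_sqrt_divide)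
  also have "\<dots> \<le> gamma_max r m * (1 / sqrt (real (r k)))"
    using step_ratio_le_gamma_max[OF assms] by (intro mult_right_mono) auto
  finally show ?thesis .
qed

lemma grid_point_below:
  assumes "r 1 \<le> r'" "r' \<le> r m"
  obtains k where "k \<in> {1..m}" "r k \<le> r'" "gamma_min r m * sqrt (real r') \<le> sqrt (real (r k))"
proof -
  define K where "K = {k \<in> {1..m}. r k \<le> r'}"
  have "1 \<in> K"
    unfolding K_def using assms two_le_m by auto
  then have k: "Max K \<in> K"
    unfolding K_def by (intro Max_in) auto
  have "gamma_min r m * sqrt (real r') \<le> sqrt (real (r (Max K)))"
  proof (cases "Max K < m")
    case True
    have "Max K + 1 \<notin> K"
      using Max_ge[of K "Max K + 1"] unfolding K_def by fastforce
    then have "r' < r (Max K + 1)"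
      using True k unfolding K_def by auto
    then have "sqrt (real (r (Max K)) / real (r (Max K + 1))) \<le> sqrt (real (r (Max K)) / real r')"
      using r_pos assms by (intro real_sqrt_le_mono divide_left_mono) auto
    then have "gamma_min r m \<le> sqrt (real (r (Max K))) / sqrt (real r')"
      using gamma_min_le_step_ratio[of "Max K"] True k unfolding K_def by (simp add: real_sqrt_divide)
    then show ?thesis
      using r_pos assms by (simp add: field_simps)
  next
    case False
    then have "r (Max K) = r'"
      using k assms unfolding K_def by auto
    then show ?thesis
      using gamma_min_le_1 mult_right_mono[OF gamma_min_le_1, of "sqrt (real r')"] by simp
  qed
  then show thesis
    using k that unfolding K_def by auto
qed

lemma Phi_ge_early: "0 < \<beta> \<Longrightarrow> 1 + 1 / \<beta> \<le> Phi r m \<beta>"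
proof -
  assume "0 < \<beta>"
  then have "1 / \<beta> \<le> (2 * \<beta> + 2) / \<beta>"
    by (intro divide_right_mono) auto
  also have "\<dots> \<le> (2 * \<beta> + 2) / (\<beta> * (1 - gamma_max r m))"
    using \<open>0 < \<beta>\<close> gamma_max_less_1 gamma_max_nonneg
    by (intro divide_left_mono mult_pos_pos) (auto simp: mult_le_cancel_left1)
  finally show ?thesis
    unfolding Phi_def by linarith
qed

lemma Phi_ge_late: "1 + (2 * \<beta> + 2) / (gamma_min r m * (1 - gamma_max r m)) \<le> Phi r m \<beta>"
  unfolding Phi_def by linarith

end

text \<open>Passed tests bound consecutive estimates by a multiple of 1 / sqrt r_k, which decays
  geometrically with ratio gamma_max.\<close>
lemma (in window_grid) late_stop_drift:
  fixes N :: "'a::ab_group_add \<Rightarrow> real" and Ch :: "nat \<Rightarrow> 'a"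
  assumes "group_seminorm N" "0 \<le> A" "0 \<le> \<beta>" "1 \<le> ks" "ks \<le> kh" "kh \<le> m"
    and passed: "\<And>k. ks \<le> k \<Longrightarrow> k < kh \<Longrightarrow> N (Ch (k + 1) - Ch k)
      \<le> A * (2 * \<beta> / sqrt (real (r k)) + sqrt ((1 - real (r k) / real (r (k + 1))) / real (r k)))"
  shows "N (Ch kh - Ch ks) \<le> A * (2 * \<beta> + 1) * (1 / sqrt (real (r ks))) / (1 - gamma_max r m)"
proof -
  interpret group_seminorm N by fact
  show ?thesis
  proof (rule geometric_telescoping[where x = "\<lambda>k. 1 / sqrt (real (r k))",
        OF \<open>ks \<le> kh\<close> gamma_max_nonneg gamma_max_less_1])
    show "0 \<le> A * (2 * \<beta> + 1)"
      using assms by simp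
    fix k assume k: "ks \<le> k" "k < kh"
    then show "1 / sqrt (real (r (Suc k))) \<le> gamma_max r m * (1 / sqrt (real (r k)))"
      using inverse_sqrt_step[of k] assms by simp
    have "N (Ch (Suc k) - Ch k) \<le> A * (2 * \<beta> / sqrt (real (r k)) + 1 / sqrt (real (r k)))"
      using passed[OF k] sqrt_step_deviation_le[of "r k" "r (k + 1)"] \<open>0 \<le> A\<close>
      by (smt (verit) Suc_eq_plus1 mult_left_mono)
    then show "N (Ch (Suc k) - Ch k) \<le> A * (2 * \<beta> + 1) * (1 / sqrt (real (r k)))"
      by (simp add: add_divide_distrib[symmetric])
  qed simp
qed

lemma (in window_grid) late_stop_error:
  fixes N :: "'a::ab_group_add \<Rightarrow> real" and Ch Cb :: "nat \<Rightarrow> 'a"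
  assumes "group_seminorm N" "0 \<le> A" "0 \<le> \<beta>" "ks \<in> {1..m}" "ks \<le> kh" "kh \<le> m"
    and passed: "\<And>k. ks \<le> k \<Longrightarrow> k < kh \<Longrightarrow> N (Ch (k + 1) - Ch k)
      \<le> A * (2 * \<beta> / sqrt (real (r k)) + sqrt ((1 - real (r k) / real (r (k + 1))) / real (r k)))"
    and noise: "N (Ch ks - Cb ks) \<le> A / sqrt (real (r ks))"
    and bias: "N (Cb ks - C) \<le> B"
    and "0 < r'" and grid: "gamma_min r m * sqrt (real r') \<le> sqrt (real (r ks))"
  shows "N (Ch kh - C) \<le> A / sqrt (real r') * (Phi r m \<beta> - 1) + B"
proof -
  interpret group_seminorm N by fact
  define gM gm s where "gM = gamma_max r m" and "gm = gamma_min r m" and "s = sqrt (real (r ks))"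
  have "0 < s"
    using r_positive[of ks] assms unfolding s_def by auto
  have "N (Ch kh - C) \<le> N (Ch kh - Ch ks) + N (Ch ks - Cb ks) + N (Cb ks - C)"
    using triangle_diff[of "Ch kh" C "Ch ks"] triangle_diff[of "Ch ks" C "Cb ks"] by linarith
  also have "\<dots> \<le> A * (2 * \<beta> + 1) * (1 / s) / (1 - gM) + A / s + B"
    using late_stop_drift[OF assms(1-3) _ assms(5,6) passed] assms(4) noise bias
    unfolding s_def gM_def by fastforce
  also have "A * (2 * \<beta> + 1) * (1 / s) / (1 - gM) + A / s = A / s * ((2 * \<beta> + 2 - gM) / (1 - gM))"
    using gamma_max_less_1 \<open>0 < s\<close> unfolding gM_def by (simp add: field_simps)
  also have "\<dots> \<le> A / (gm * sqrt (real r')) * ((2 * \<beta> + 2) / (1 - gM))"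
    using grid gamma_min_pos gamma_max_less_1 gamma_max_nonneg \<open>0 \<le> A\<close> \<open>0 \<le> \<beta>\<close>
      \<open>0 < s\<close> \<open>0 < r'\<close> unfolding s_def gm_def gM_def
    by (intro mult_mono divide_left_mono divide_right_mono) auto
  also have "\<dots> = A / sqrt (real r') * ((2 * \<beta> + 2) / (gm * (1 - gM)))"
    by simp
  also have "\<dots> \<le> A / sqrt (real r') * (Phi r m \<beta> - 1)"
    using Phi_ge_late[of \<beta>] \<open>0 \<le> A\<close> unfolding gm_def gM_def by (intro mult_left_mono) auto
  finally show ?thesis
    by simp
qed

lemma (in window_grid) oracle_inequality:
  fixes N :: "'a::ab_group_add \<Rightarrow> real" and Ch Cb :: "nat \<Rightarrow> 'a" and C :: 'a and b :: "nat \<Rightarrow> real"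
  assumes "group_seminorm N" "0 \<le> A" "0 < \<beta>" "mono b"
    and noise: "\<And>k. k \<in> {1..m} \<Longrightarrow> r k \<le> t \<Longrightarrow> N (Ch k - Cb k) \<le> A / sqrt (real (r k))"
    and noise_step: "\<And>k. k \<in> {1..<m} \<Longrightarrow> r (k + 1) \<le> t \<Longrightarrow>
      N ((Ch (k + 1) - Ch k) - (Cb (k + 1) - Cb k))
        \<le> A * sqrt ((1 - real (r k) / real (r (k + 1))) / real (r k))"
    and bias: "\<And>k. k \<in> {1..m} \<Longrightarrow> r k \<le> t \<Longrightarrow> N (Cb k - C) \<le> b (r k)"
    and kh: "kh \<in> {1..m}"
    and passed: "\<And>k. k \<in> {1..<kh} \<Longrightarrow> N (Ch (k + 1) - Ch k)
      \<le> A * (2 * \<beta> / sqrt (real (r k)) + sqrt ((1 - real (r k) / real (r (k + 1))) / real (r k)))"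
    and stopped: "kh < m \<Longrightarrow> r (kh + 1) \<le> t \<Longrightarrow> \<not> N (Ch (kh + 1) - Ch kh)
      \<le> A * (2 * \<beta> / sqrt (real (r kh)) + sqrt ((1 - real (r kh) / real (r (kh + 1))) / real (r kh)))"
    and r': "r 1 \<le> r'" "r' \<le> t" "r' \<le> r m"
  shows "N (Ch kh - C) \<le> Phi r m \<beta> * (A / sqrt (real r') + b r')"
proof -
  interpret group_seminorm N by fact
  \<comment> \<open>ks is a grid index just below r'; the cases are whether ADAPT stopped before reaching it.\<close>
  obtain ks where ks: "ks \<in> {1..m}" "r ks \<le> r'"
    and ks_sqrt: "gamma_min r m * sqrt (real r') \<le> sqrt (real (r ks))"
    using grid_point_below r' by blast
  have bias_le: "N (Cb k - C) \<le> b r'" if "k \<in> {1..m}" "r k \<le> r'" for k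
    using bias[OF that(1)] that r' monoD[OF \<open>mono b\<close> that(2)] by linarith
  have b_nonneg: "0 \<le> b r'"
    using bias_le[of 1] nonneg[of "Cb 1 - C"] r' two_le_m by force
  have Phi: "1 \<le> Phi r m \<beta>"
    using Phi_ge_early[OF \<open>0 < \<beta>\<close>] \<open>0 < \<beta>\<close> by (smt (verit) divide_pos_pos)
  have A_nonneg: "0 \<le> A / sqrt (real r')"
    using \<open>0 \<le> A\<close> by simp
  have Phi_b: "Phi r m \<beta> * b r' \<le> Phi r m \<beta> * (A / sqrt (real r') + b r')"
    using Phi A_nonneg by (intro mult_left_mono) auto
  have late_slack: "A / sqrt (real r') * (Phi r m \<beta> - 1) + b r'
      \<le> Phi r m \<beta> * (A / sqrt (real r') + b r')"
    using mult_right_mono[OF Phi b_nonneg] A_nonneg by (simp add: algebra_simps)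
  show ?thesis
  proof (cases "kh < ks")
    case True
    then have kh_step: "kh \<in> {1..<m}" "r (kh + 1) \<le> r'" "r kh \<le> r'"
      using kh ks r_mono[of "kh + 1" ks] r_mono[of kh "kh + 1"] by auto
    have "N (Ch kh - C) \<le> (1 + 1 / \<beta>) * b r'"
    proof (rule early_stop_error[OF \<open>0 < \<beta>\<close>])
      show "N (Ch (kh + 1) - Ch kh) > A * (2 * \<beta> / sqrt (real (r kh))
          + sqrt ((1 - real (r kh) / real (r (kh + 1))) / real (r kh)))"
        using stopped kh_step r' by auto
      show "N ((Ch (kh + 1) - Ch kh) - (Cb (kh + 1) - Cb kh))
          \<le> A * sqrt ((1 - real (r kh) / real (r (kh + 1))) / real (r kh))"
        using noise_step kh_step r' by auto
      show "N (Ch kh - Cb kh) \<le> A / sqrt (real (r kh))"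
        using noise kh_step r' by auto
      show "N (Cb (kh + 1) - C) \<le> b r'" "N (Cb kh - C) \<le> b r'"
        using bias_le kh_step by auto
    qed
    also have "\<dots> \<le> Phi r m \<beta> * b r'"
      using Phi_ge_early[OF \<open>0 < \<beta>\<close>] b_nonneg by (rule mult_right_mono)
    finally show ?thesis
      using Phi_b by linarith
  next
    case False
    have "N (Ch kh - C) \<le> A / sqrt (real r') * (Phi r m \<beta> - 1) + b r'"
      using \<open>0 < \<beta>\<close> ks kh False r' r_pos
      by (intro late_stop_error[where Cb = Cb, OF \<open>group_seminorm N\<close> \<open>0 \<le> A\<close> _ ks(1) _ _ _ _ _ _ ks_sqrt]
          passed noise bias_le) auto
    then show ?thesis
      using late_slack by linarith
  qed
qed

section \<open>Window averages\<close>

definition window_weight :: "nat \<Rightarrow> nat \<Rightarrow> nat \<Rightarrow> real" where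
  "window_weight t r u = (if u \<in> {t - r + 1..t} then 1 / real r else 0)"

definition window_average :: "(nat \<Rightarrow> nat \<Rightarrow> nat \<Rightarrow> real) \<Rightarrow> nat \<Rightarrow> nat \<Rightarrow> nat \<Rightarrow> nat \<Rightarrow> real" where
  "window_average C t r i j = (\<Sum>u\<in>{1..t}. window_weight t r u * C u i j)"

lemma sum_window_weight:
  "(\<Sum>u\<in>{1..t}. window_weight t r u * f u) = (\<Sum>u = t - r + 1..t. f u) / real r"
proof -
  have "(\<Sum>u\<in>{1..t}. window_weight t r u * f u) = (\<Sum>u\<in>{t - r + 1..t}. f u / real r)"
    unfolding window_weight_def by (intro sum.mono_neutral_cong_right) auto
  then show ?thesis
    by (simp add: sum_divide_distrib)
qed

lemma emp_corr_eq_weighted_sum: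
  "emp_corr ell X r t \<omega> i j = (\<Sum>u\<in>{1..t}. window_weight t r u * (ell i (X u \<omega>) * ell j (X u \<omega>)))"
  unfolding emp_corr_def sum_window_weight by simp

lemma sum_window_weight_square:
  assumes "0 < r" "r \<le> t"
  shows "(\<Sum>u\<in>{1..t}. (window_weight t r u)\<^sup>2) = 1 / real r"
proof -
  have "(\<Sum>u\<in>{1..t}. (window_weight t r u)\<^sup>2) = (\<Sum>u = t - r + 1..t. window_weight t r u) / real r"
    unfolding power2_eq_square sum_window_weight ..
  also have "(\<Sum>u = t - r + 1..t. window_weight t r u) = 1"
    using assms by (simp add: window_weight_def)
  finally show ?thesis .
qed

lemma sum_window_weight_diff_square:
  assumes "0 < a" "a < b" "b \<le> t"
  shows "(\<Sum>u\<in>{1..t}. (window_weight t b u - window_weight t a u)\<^sup>2) = (1 - real a / real b) / real a"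
proof -
  have "(\<Sum>u = t - b + 1..t. window_weight t a u) = (\<Sum>u = t - a + 1..t. 1 / real a)"
    unfolding window_weight_def using assms by (intro sum.mono_neutral_cong_right) auto
  then have cross: "(\<Sum>u\<in>{1..t}. window_weight t b u * window_weight t a u) = 1 / real b"
    unfolding sum_window_weight using assms by simp
  have "(\<Sum>u\<in>{1..t}. (window_weight t b u - window_weight t a u)\<^sup>2)
      = (\<Sum>u\<in>{1..t}. (window_weight t b u)\<^sup>2) - 2 * (\<Sum>u\<in>{1..t}. window_weight t b u * window_weight t a u)
        + (\<Sum>u\<in>{1..t}. (window_weight t a u)\<^sup>2)"
    by (simp add: power2_diff sum.distrib sum_subtractf sum_distrib_left mult.assoc)
  also have "\<dots> = 1 / real b - 2 / real b + 1 / real a"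
  proof -
    have "(\<Sum>u\<in>{1..t}. (window_weight t a u)\<^sup>2) = 1 / real a"
      "(\<Sum>u\<in>{1..t}. (window_weight t b u)\<^sup>2) = 1 / real b"
      using assms by (intro sum_window_weight_square; simp)+
    then show ?thesis
      unfolding cross by simp
  qed
  also have "\<dots> = (1 - real a / real b) / real a"
    using assms by (simp add: field_simps)
  finally show ?thesis .
qed

definition drift :: "nat \<Rightarrow> (nat \<Rightarrow> nat \<Rightarrow> nat \<Rightarrow> real) \<Rightarrow> nat \<Rightarrow> nat \<Rightarrow> real" where
  "drift n C t r = (\<Sum>u = t - r + 1..t - 1. maxnorm n (\<lambda>i j. C u i j - C (u + 1) i j))"

lemma mono_drift:
  assumes "1 \<le> n"
  shows "mono (drift n C t)"
proof (rule monoI)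
  interpret group_seminorm "maxnorm n :: (nat \<Rightarrow> nat \<Rightarrow> real) \<Rightarrow> real"
    using group_seminorm_maxnorm[OF assms] .
  show "drift n C t a \<le> drift n C t b" if "a \<le> b" for a b
    unfolding drift_def using that
    by (intro sum_mono2) (auto simp: nonneg[unfolded maxnorm_minus])
qed

lemma window_average_drift:
  assumes "1 \<le> n" "0 < r" "r \<le> t"
  shows "maxnorm n (window_average C t r - C t) \<le> drift n C t r"
proof -
  interpret group_seminorm "maxnorm n :: (nat \<Rightarrow> nat \<Rightarrow> real) \<Rightarrow> real"
    using group_seminorm_maxnorm[OF assms(1)] .
  define W where "W = {t - r + 1..t}"
  have close: "\<bar>C u i j - C t i j\<bar> \<le> drift n C t r"
    if "u \<in> W" "i \<in> {1..n}" "j \<in> {1..n}" for u i j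
  proof -
    have "\<bar>C u i j - C t i j\<bar> \<le> maxnorm n (C u - C t)"
      using abs_le_maxnorm[OF that(2,3)] by (simp add: maxnorm_minus)
    also have "\<dots> \<le> (\<Sum>k = u..<t. maxnorm n (C k - C (Suc k)))"
      using that(1) unfolding W_def by (intro telescoping) auto
    also have "\<dots> \<le> drift n C t r"
      unfolding drift_def maxnorm_minus[symmetric] Suc_eq_plus1 using that(1) unfolding W_def
      by (intro sum_mono2) (auto simp: nonneg)
    finally show ?thesis .
  qed
  show ?thesis
    unfolding maxnorm_le_iff[OF assms(1)]
  proof (intro ballI)
    fix i j assume ij: "i \<in> {1..n}" "j \<in> {1..n}"
    have "(window_average C t r - C t) i j = (\<Sum>u\<in>W. C u i j - C t i j) / real r"
      using assms unfolding window_average_def sum_window_weight W_def by (simp add: sum_subtractf field_simps)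
    also have "\<bar>\<dots>\<bar> \<le> (\<Sum>u\<in>W. \<bar>C u i j - C t i j\<bar>) / real r"
      by (simp add: divide_right_mono sum_abs)
    also have "\<dots> \<le> (\<Sum>u\<in>W. drift n C t r) / real r"
      using close[OF _ ij] by (intro divide_right_mono sum_mono) auto
    also have "\<dots> = drift n C t r"
      using assms unfolding W_def by simp
    finally show "\<bar>(window_average C t r - C t) i j\<bar> \<le> drift n C t r" .
  qed
qed

section \<open>Concentration of windowed correlations\<close>

text \<open>Hypothesis (A1) only equates distributions, which already forces measurability.\<close>
lemma measurable_of_distr_eq:
  assumes "prob_space M" "prob_space N" and f: "f \<in> space M \<rightarrow> space N"
    and eq: "distr M N f = N"
  shows "f \<in> measurable M N"
proof (rule measurableI)
  show "f x \<in> space N" if "x \<in> space M" for x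
    using f that by auto
  have null: "emeasure N B = 0" if "B \<in> sets N" "f -` B \<inter> space M \<notin> sets M" for B
  proof -
    have "emeasure N B = emeasure (distr M N f) B"
      using eq by simp
    also have "\<dots> = 0"
      unfolding distr_def emeasure_measure_of_conv using that by (simp add: emeasure_notin_sets)
    finally show ?thesis .
  qed
  fix A assume A: "A \<in> sets N"
  show "f -` A \<inter> space M \<in> sets M"
  proof (rule ccontr)
    assume A_not: "f -` A \<inter> space M \<notin> sets M"
    have "f -` (space N - A) \<inter> space M = space M - (f -` A \<inter> space M)"
      using f by auto
    then have "f -` (space N - A) \<inter> space M \<notin> sets M"
      using A_not by (metis Diff_Diff_Int Int_absorb1 inf_le2 sets.compl_sets)
    \<comment> \<open>Both a set and its complement would be null, contradicting total mass 1.\<close>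
    then have "emeasure N A + emeasure N (space N - A) = 0"
      using null A A_not by simp
    moreover have "emeasure N A + emeasure N (space N - A) = emeasure N (space N)"
      using A by (subst plus_emeasure) (auto simp: Un_absorb1 sets.sets_into_space)
    ultimately show False
      using prob_space.emeasure_space_1[OF \<open>prob_space N\<close>] by simp
  qed
qed

lemma (in prob_space) indep_vars_of_distr_eq_PiM:
  assumes "I \<noteq> {}" and D: "\<And>i. i \<in> I \<Longrightarrow> prob_space (D i)"
    and X: "\<And>i \<omega>. i \<in> I \<Longrightarrow> \<omega> \<in> space M \<Longrightarrow> X i \<omega> \<in> space (D i)"
    and eq: "distr M (PiM I D) (\<lambda>\<omega>. \<lambda>i\<in>I. X i \<omega>) = PiM I D"
  shows "indep_vars D X I" and "\<And>i. i \<in> I \<Longrightarrow> distr M (D i) (X i) = D i"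
proof -
  have F: "(\<lambda>\<omega>. \<lambda>i\<in>I. X i \<omega>) \<in> measurable M (PiM I D)"
    by (rule measurable_of_distr_eq[OF prob_space_axioms prob_space_PiM _ eq])
       (auto simp: D X space_PiM)
  have X_meas: "X i \<in> measurable M (D i)" if "i \<in> I" for i
    using measurable_comp[OF F measurable_component_singleton[OF that]] that
    by (simp add: comp_def cong: measurable_cong)
  show distr: "distr M (D i) (X i) = D i" if "i \<in> I" for i
  proof -
    have "distr M (D i) (X i) = distr M (D i) ((\<lambda>x. x i) \<circ> (\<lambda>\<omega>. \<lambda>i\<in>I. X i \<omega>))"
      using that by (intro distr_cong) auto
    also have "\<dots> = distr (distr M (PiM I D) (\<lambda>\<omega>. \<lambda>i\<in>I. X i \<omega>)) (D i) (\<lambda>x. x i)"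
      by (rule distr_distr[symmetric, OF measurable_component_singleton[OF that] F])
    also have "\<dots> = D i"
      unfolding eq using that D by (intro distr_PiM_component) auto
    finally show ?thesis .
  qed
  have "PiM I (\<lambda>i. distr M (D i) (X i)) = PiM I D"
    by (rule PiM_cong) (auto simp: distr)
  then show "indep_vars D X I"
    using eq \<open>I \<noteq> {}\<close> X_meas by (subst indep_vars_iff_distr_eq_PiM') auto
qed

lemma (in prob_space) weighted_Hoeffding:
  fixes Z :: "'i \<Rightarrow> 'a \<Rightarrow> real" and w :: "'i \<Rightarrow> real"
  assumes "finite I" and indep: "indep_vars (\<lambda>_. borel) Z I"
    and bounded: "\<And>i x. i \<in> I \<Longrightarrow> x \<in> space M \<Longrightarrow> \<bar>Z i x\<bar> \<le> 1" and "0 \<le> a"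
  shows "prob {x \<in> space M. (\<Sum>i\<in>I. w i * (Z i x - expectation (Z i))) > a * sqrt (\<Sum>i\<in>I. (w i)\<^sup>2)}
    \<le> exp (- a\<^sup>2 / 2)"
proof (cases "(\<Sum>i\<in>I. (w i)\<^sup>2) = 0")
  case True
  then have "\<forall>i\<in>I. w i = 0"
    using \<open>finite I\<close> by (simp add: sum_nonneg_eq_0_iff)
  then show ?thesis
    by simp
next
  case False
  define s where "s = (\<Sum>i\<in>I. (w i)\<^sup>2)"
  have "0 < s"
    using False unfolding s_def by (metis sum_nonneg zero_le_power2 order_less_le)
  define Y where "Y i x = w i * Z i x" for i x
  interpret Hoeffding_ineq M I Y "\<lambda>i. - \<bar>w i\<bar>" "\<lambda>i. \<bar>w i\<bar>" "\<Sum>i\<in>I. expectation (Y i)"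
  proof unfold_locales
    show "indep_vars (\<lambda>_. borel) Y I"
      unfolding Y_def by (rule indep_vars_compose2[OF indep, where Y = "\<lambda>i z. w i * z"]) auto
    show "AE x in M. Y i x \<in> {- \<bar>w i\<bar>..\<bar>w i\<bar>}" if "i \<in> I" for i
    proof (rule AE_I2)
      fix x assume "x \<in> space M"
      then have "\<bar>w i * Z i x\<bar> \<le> \<bar>w i\<bar> * 1"
        unfolding abs_mult using bounded[OF that] by (intro mult_left_mono) auto
      then show "Y i x \<in> {- \<bar>w i\<bar>..\<bar>w i\<bar>}"
        unfolding Y_def by (auto simp: abs_le_iff)
    qed
  qed (use \<open>finite I\<close> in auto)
  have width: "(\<Sum>i\<in>I. (\<bar>w i\<bar> - - \<bar>w i\<bar>)\<^sup>2) = 4 * s"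
    unfolding s_def sum_distrib_left by (intro sum.cong) (auto simp: power2_eq_square)
  have "{x \<in> space M. (\<Sum>i\<in>I. w i * (Z i x - expectation (Z i))) > a * sqrt s}
      \<subseteq> {x \<in> space M. (\<Sum>i\<in>I. Y i x) \<ge> (\<Sum>i\<in>I. expectation (Y i)) + a * sqrt s}"
  proof -
    have "expectation (Y i) = w i * expectation (Z i)" for i
      unfolding Y_def by simp
    then show ?thesis
      by (auto simp: Y_def right_diff_distrib sum_subtractf)
  qed
  then have "prob {x \<in> space M. (\<Sum>i\<in>I. w i * (Z i x - expectation (Z i))) > a * sqrt s}
      \<le> prob {x \<in> space M. (\<Sum>i\<in>I. Y i x) \<ge> (\<Sum>i\<in>I. expectation (Y i)) + a * sqrt s}"
    by (rule finite_measure_mono) measurable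
  also have "\<dots> \<le> exp (-2 * (a * sqrt s)\<^sup>2 / (4 * s))"
    using Hoeffding_ineq_ge[of "a * sqrt s"] \<open>0 \<le> a\<close> \<open>0 < s\<close> unfolding width by simp
  also have "-2 * (a * sqrt s)\<^sup>2 / (4 * s) = - a\<^sup>2 / 2"
    using \<open>0 < s\<close> by (simp add: power_mult_distrib)
  finally show ?thesis
    unfolding s_def .
qed

definition order_sign :: "nat \<Rightarrow> nat \<Rightarrow> real" where
  "order_sign i j = (if i < j then 1 else - 1)"

locale labeler_sample =
  fixes M :: "'m measure" and X :: "nat \<Rightarrow> 'm \<Rightarrow> 'x::topological_space"
    and D :: "nat \<Rightarrow> 'x measure" and ell :: "nat \<Rightarrow> 'x \<Rightarrow> real" and n t :: nat
  assumes prob_space_M: "prob_space M"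
    and D_prob: "\<And>k. 1 \<le> k \<Longrightarrow> prob_space (D k)"
    and D_sets: "\<And>k. 1 \<le> k \<Longrightarrow> sets (D k) = sets borel"
    and ell_meas: "\<And>i. i \<in> {1..n} \<Longrightarrow> ell i \<in> borel_measurable borel"
    and ell_val: "\<And>i x. i \<in> {1..n} \<Longrightarrow> ell i x \<in> {-1, 1}"
    and sample_distr: "distr M (PiM {1..t} D) (\<lambda>\<omega>. \<lambda>k\<in>{1..t}. X k \<omega>) = PiM {1..t} D"
    and one_le_n: "1 \<le> n" and one_le_t: "1 \<le> t"
begin

sublocale prob_space M
  by (rule prob_space_M)

definition deviation :: "(nat \<Rightarrow> real) \<Rightarrow> nat \<Rightarrow> nat \<Rightarrow> 'm \<Rightarrow> real" where
  "deviation w i j \<omega> = (\<Sum>u\<in>{1..t}. w u * (ell i (X u \<omega>) * ell j (X u \<omega>) - corr_mat ell D u i j))"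

lemma
  shows indep_X: "indep_vars D X {1..t}"
    and distr_X: "u \<in> {1..t} \<Longrightarrow> distr M (D u) (X u) = D u"
  using indep_vars_of_distr_eq_PiM[OF _ _ _ sample_distr] one_le_t D_prob
    sets_eq_imp_space_eq[OF D_sets] by auto

lemma measurable_X_D: "u \<in> {1..t} \<Longrightarrow> X u \<in> measurable M (D u)"
  using indep_X unfolding indep_vars_def by blast

lemma measurable_X: "u \<in> {1..t} \<Longrightarrow> X u \<in> borel_measurable M"
  using measurable_X_D[of u] measurable_cong_sets[of M M "D u" borel] D_sets[of u] by simp

lemma measurable_label_product:
  "i \<in> {1..n} \<Longrightarrow> j \<in> {1..n} \<Longrightarrow> u \<in> {1..t} \<Longrightarrow> (\<lambda>\<omega>. ell i (X u \<omega>) * ell j (X u \<omega>)) \<in> borel_measurable M"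
  using measurable_compose[OF measurable_X ell_meas] by simp

lemma measurable_label_product_D:
  "i \<in> {1..n} \<Longrightarrow> j \<in> {1..n} \<Longrightarrow> 1 \<le> u \<Longrightarrow> (\<lambda>x. ell i x * ell j x) \<in> borel_measurable (D u)"
  using ell_meas D_sets[of u] measurable_cong_sets[of "D u" borel borel borel] by simp

lemma expectation_label_product:
  assumes "i \<in> {1..n}" "j \<in> {1..n}" "u \<in> {1..t}"
  shows "expectation (\<lambda>\<omega>. ell i (X u \<omega>) * ell j (X u \<omega>)) = corr_mat ell D u i j"
proof -
  have "expectation (\<lambda>\<omega>. ell i (X u \<omega>) * ell j (X u \<omega>))
      = (\<integral>x. ell i x * ell j x \<partial>distr M (D u) (X u))"
    using assms measurable_X_D measurable_label_product_D by (intro integral_distr[symmetric]) auto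
  then show ?thesis
    unfolding distr_X[OF assms(3)] corr_mat_def .
qed

lemma deviation_diag: "i \<in> {1..n} \<Longrightarrow> deviation w i i \<omega> = 0"
proof -
  assume i: "i \<in> {1..n}"
  have square_one: "ell i x * ell i x = 1" for x
    using ell_val[OF i, of x] by auto
  have "corr_mat ell D u i i = 1" if "u \<in> {1..t}" for u
  proof -
    interpret Du: prob_space "D u"
      using D_prob that by simp
    show ?thesis
      unfolding corr_mat_def square_one by (simp add: Du.prob_space)
  qed
  then show ?thesis
    unfolding deviation_def square_one by (auto intro!: sum.neutral)
qed

lemma deviation_commute: "deviation w i j \<omega> = deviation w j i \<omega>"
  unfolding deviation_def corr_mat_def by (simp add: mult.commute)

lemma deviation_scale: "deviation (\<lambda>u. c * w u) i j \<omega> = c * deviation w i j \<omega>"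
  unfolding deviation_def by (simp add: sum_distrib_left mult.assoc)

lemma deviation_diff: "deviation (w1 - w2) i j \<omega> = deviation w1 i j \<omega> - deviation w2 i j \<omega>"
  unfolding deviation_def by (simp add: left_diff_distrib sum_subtractf)

lemma borel_measurable_deviation:
  "i \<in> {1..n} \<Longrightarrow> j \<in> {1..n} \<Longrightarrow> deviation w i j \<in> borel_measurable M"
  unfolding deviation_def[abs_def]
  by (intro borel_measurable_sum borel_measurable_times borel_measurable_diff borel_measurable_const
      measurable_label_product)

lemma prob_deviation_gt:
  assumes "i \<in> {1..n}" "j \<in> {1..n}" "0 \<le> a"
  shows "prob {\<omega> \<in> space M. deviation w i j \<omega> > a * sqrt (\<Sum>u\<in>{1..t}. (w u)\<^sup>2)} \<le> exp (- a\<^sup>2 / 2)"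
proof -
  have "indep_vars (\<lambda>_. borel) (\<lambda>u \<omega>. ell i (X u \<omega>) * ell j (X u \<omega>)) {1..t}"
    using assms by (intro indep_vars_compose2[OF indep_X] measurable_label_product_D) auto
  moreover have "\<bar>ell i (X u \<omega>) * ell j (X u \<omega>)\<bar> \<le> 1" for u \<omega>
    using ell_val[OF assms(1), of "X u \<omega>"] ell_val[OF assms(2), of "X u \<omega>"] by auto
  ultimately have "prob {\<omega> \<in> space M. (\<Sum>u\<in>{1..t}. w u * (ell i (X u \<omega>) * ell j (X u \<omega>)
      - expectation (\<lambda>\<omega>. ell i (X u \<omega>) * ell j (X u \<omega>)))) > a * sqrt (\<Sum>u\<in>{1..t}. (w u)\<^sup>2)}
    \<le> exp (- a\<^sup>2 / 2)"
    using \<open>0 \<le> a\<close> by (intro weighted_Hoeffding) auto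
  moreover have "(\<Sum>u\<in>{1..t}. w u * (ell i (X u \<omega>) * ell j (X u \<omega>)
      - expectation (\<lambda>\<omega>. ell i (X u \<omega>) * ell j (X u \<omega>)))) = deviation w i j \<omega>" for \<omega>
    unfolding deviation_def using assms by (intro sum.cong) (simp_all add: expectation_label_product)
  ultimately show ?thesis
    by simp
qed

lemma card_off_diagonal: "card {(i, j). i \<in> {1..n} \<and> j \<in> {1..n} \<and> i \<noteq> j} = n * (n - 1)"
proof -
  have "{(i, j). i \<in> {1..n} \<and> j \<in> {1..n} \<and> i \<noteq> j} = {1..n} \<times> {1..n} - (\<lambda>i. (i, i)) ` {1..n}"
    by auto
  moreover have "card ((\<lambda>i. (i, i)) ` {1..n}) = n"
    by (simp add: card_image inj_on_def)
  ultimately show ?thesis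
    by (simp add: card_Diff_subset diff_mult_distrib2 image_subset_iff)
qed

text \<open>Diagonal deviations vanish and deviations are symmetric in i and j, so a large deviation
  at an entry is a large one-sided deviation at (i, j) or at (j, i), for the weights signed by the
  order of the two indices. This gives n (n - 1) one-sided events per weight vector.\<close>
lemma large_deviation_one_sided:
  assumes "i \<in> {1..n}" "0 \<le> a" and big: "\<bar>deviation w i j \<omega>\<bar> > a * sqrt (\<Sum>u\<in>{1..t}. (w u)\<^sup>2)"
  shows "i \<noteq> j"
    and "deviation (\<lambda>u. order_sign i j * w u) i j \<omega> > a * sqrt (\<Sum>u\<in>{1..t}. (w u)\<^sup>2)
      \<or> deviation (\<lambda>u. order_sign j i * w u) j i \<omega> > a * sqrt (\<Sum>u\<in>{1..t}. (w u)\<^sup>2)"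
proof -
  have "0 \<le> a * sqrt (\<Sum>u\<in>{1..t}. (w u)\<^sup>2)"
    using \<open>0 \<le> a\<close> by (simp add: sum_nonneg)
  then show "i \<noteq> j"
    using big deviation_diag[OF assms(1)] by auto
  then have sign: "order_sign j i = - order_sign i j" "\<bar>order_sign i j\<bar> = 1"
    unfolding order_sign_def by auto
  have "deviation (\<lambda>u. order_sign i j * w u) i j \<omega> = order_sign i j * deviation w i j \<omega>"
    "deviation (\<lambda>u. order_sign j i * w u) j i \<omega> = - (order_sign i j * deviation w i j \<omega>)"
    unfolding deviation_scale deviation_commute[of w j i] sign by simp_all
  moreover have "\<bar>order_sign i j * deviation w i j \<omega>\<bar> > a * sqrt (\<Sum>u\<in>{1..t}. (w u)\<^sup>2)"
    using big sign by (simp add: abs_mult)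
  ultimately show "deviation (\<lambda>u. order_sign i j * w u) i j \<omega> > a * sqrt (\<Sum>u\<in>{1..t}. (w u)\<^sup>2)
      \<or> deviation (\<lambda>u. order_sign j i * w u) j i \<omega> > a * sqrt (\<Sum>u\<in>{1..t}. (w u)\<^sup>2)"
    by linarith
qed

lemma prob_one_sided_deviation_gt:
  assumes "i \<in> {1..n}" "j \<in> {1..n}" "0 \<le> a"
  shows "prob {\<omega> \<in> space M. deviation (\<lambda>u. order_sign i j * w u) i j \<omega> > a * sqrt (\<Sum>u\<in>{1..t}. (w u)\<^sup>2)}
    \<le> exp (- a\<^sup>2 / 2)"
proof -
  have "(\<Sum>u\<in>{1..t}. (w u)\<^sup>2) = (\<Sum>u\<in>{1..t}. (order_sign i j * w u)\<^sup>2)"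
    unfolding order_sign_def by (simp add: power_mult_distrib)
  then show ?thesis
    using prob_deviation_gt[OF assms] by simp
qed

lemma prob_large_deviation:
  assumes "finite W" "0 \<le> a"
  shows "prob {\<omega> \<in> space M. \<exists>w\<in>W. \<exists>i\<in>{1..n}. \<exists>j\<in>{1..n}.
      \<bar>deviation w i j \<omega>\<bar> > a * sqrt (\<Sum>u\<in>{1..t}. (w u)\<^sup>2)}
    \<le> real (card W * (n * (n - 1))) * exp (- a\<^sup>2 / 2)"
proof -
  define Off where "Off = {(i, j). i \<in> {1..n} \<and> j \<in> {1..n} \<and> i \<noteq> j}"
  define E where "E = (\<lambda>(w, i, j). {\<omega> \<in> space M.
    deviation (\<lambda>u. order_sign i j * w u) i j \<omega> > a * sqrt (\<Sum>u\<in>{1..t}. (w u)\<^sup>2)})"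
  have "Off \<subseteq> {1..n} \<times> {1..n}"
    unfolding Off_def by auto
  then have fin: "finite (W \<times> Off)"
    using \<open>finite W\<close> finite_subset by blast
  have E_sets: "E q \<in> sets M" if "q \<in> W \<times> Off" for q
    using that unfolding E_def Off_def by (auto intro!: borel_measurable_less borel_measurable_deviation)
  have "{\<omega> \<in> space M. \<exists>w\<in>W. \<exists>i\<in>{1..n}. \<exists>j\<in>{1..n}.
      \<bar>deviation w i j \<omega>\<bar> > a * sqrt (\<Sum>u\<in>{1..t}. (w u)\<^sup>2)} \<subseteq> (\<Union>q\<in>W \<times> Off. E q)"
    using large_deviation_one_sided[OF _ \<open>0 \<le> a\<close>] unfolding E_def Off_def by fastforce
  then have "prob {\<omega> \<in> space M. \<exists>w\<in>W. \<exists>i\<in>{1..n}. \<exists>j\<in>{1..n}.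
      \<bar>deviation w i j \<omega>\<bar> > a * sqrt (\<Sum>u\<in>{1..t}. (w u)\<^sup>2)} \<le> prob (\<Union>q\<in>W \<times> Off. E q)"
    using fin E_sets by (intro finite_measure_mono) auto
  also have "\<dots> \<le> (\<Sum>q\<in>W \<times> Off. prob (E q))"
    using fin E_sets by (intro measure_UNION_le) auto
  also have "\<dots> \<le> real (card (W \<times> Off)) * exp (- a\<^sup>2 / 2)"
    using prob_one_sided_deviation_gt[OF _ _ \<open>0 \<le> a\<close>]
    by (intro sum_bounded_above) (auto simp: E_def Off_def)
  also have "card (W \<times> Off) = card W * (n * (n - 1))"
    unfolding Off_def card_cartesian_product card_off_diagonal ..
  finally show ?thesis .
qed

lemma sets_large_deviation:
  assumes "finite W"
  shows "{\<omega> \<in> space M. \<exists>w\<in>W. \<exists>i\<in>{1..n}. \<exists>j\<in>{1..n}.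
    \<bar>deviation w i j \<omega>\<bar> > a * sqrt (\<Sum>u\<in>{1..t}. (w u)\<^sup>2)} \<in> sets M"
  using assms by (intro sets.sets_Collect_finite_Ex borel_measurable_less borel_measurable_const
      borel_measurable_abs borel_measurable_deviation) auto

lemma emp_corr_minus_window_average:
  "emp_corr ell X r t \<omega> - window_average (corr_mat ell D) t r = (\<lambda>i j. deviation (window_weight t r) i j \<omega>)"
  by (simp add: fun_eq_iff emp_corr_eq_weighted_sum window_average_def deviation_def
      right_diff_distrib sum_subtractf)

lemma window_noise_le:
  assumes "0 < r" "r \<le> t"
    and small: "\<And>i j. i \<in> {1..n} \<Longrightarrow> j \<in> {1..n} \<Longrightarrow>
      \<bar>deviation (window_weight t r) i j \<omega>\<bar> \<le> A * sqrt (\<Sum>u\<in>{1..t}. (window_weight t r u)\<^sup>2)"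
  shows "maxnorm n (emp_corr ell X r t \<omega> - window_average (corr_mat ell D) t r) \<le> A / sqrt (real r)"
  using small sum_window_weight_square[OF assms(1,2)]
  unfolding emp_corr_minus_window_average maxnorm_le_iff[OF one_le_n] by (simp add: real_sqrt_divide)

lemma window_step_noise_le:
  assumes "0 < a" "a < b" "b \<le> t"
    and small: "\<And>i j. i \<in> {1..n} \<Longrightarrow> j \<in> {1..n} \<Longrightarrow>
      \<bar>deviation (window_weight t b - window_weight t a) i j \<omega>\<bar>
        \<le> A * sqrt (\<Sum>u\<in>{1..t}. ((window_weight t b - window_weight t a) u)\<^sup>2)"
  shows "maxnorm n ((emp_corr ell X b t \<omega> - emp_corr ell X a t \<omega>)
      - (window_average (corr_mat ell D) t b - window_average (corr_mat ell D) t a))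
    \<le> A * sqrt ((1 - real a / real b) / real a)"
proof -
  have "(emp_corr ell X b t \<omega> - emp_corr ell X a t \<omega>)
      - (window_average (corr_mat ell D) t b - window_average (corr_mat ell D) t a)
    = (emp_corr ell X b t \<omega> - window_average (corr_mat ell D) t b)
      - (emp_corr ell X a t \<omega> - window_average (corr_mat ell D) t a)"
    by (simp add: algebra_simps)
  also have "\<dots> = (\<lambda>i j. deviation (window_weight t b - window_weight t a) i j \<omega>)"
    unfolding emp_corr_minus_window_average deviation_diff by (simp add: fun_diff_def)
  finally show ?thesis
    using small sum_window_weight_diff_square[OF assms(1-3)]
    unfolding maxnorm_le_iff[OF one_le_n] by simp
qed

lemma borel_measurable_emp_corr:
  "i \<in> {1..n} \<Longrightarrow> j \<in> {1..n} \<Longrightarrow> (\<lambda>\<omega>. emp_corr ell X r t \<omega> i j) \<in> borel_measurable M"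
  unfolding emp_corr_eq_weighted_sum
  by (intro borel_measurable_sum borel_measurable_times borel_measurable_const measurable_label_product)

end

section \<open>The window selected by ADAPT\<close>

text \<open>The defining equation of adapt_loop is a simp rule that unfolds without end.\<close>
context
  notes adapt_loop.simps [simp del]
begin

lemma adapt_loop_spec:
  assumes "k \<le> m" "0 < m"
  shows "k \<le> adapt_loop g m k \<and> adapt_loop g m k \<le> m \<and> (\<forall>j\<in>{k..<adapt_loop g m k}. g j)
    \<and> (adapt_loop g m k < m \<longrightarrow> \<not> g (adapt_loop g m k))"
  using assms
proof (induction g m k rule: adapt_loop.induct)
  case (1 g m k)
  show ?case
  proof (cases "k \<le> m - 1 \<and> g k")
    case True
    have IH: "k + 1 \<le> adapt_loop g m (k + 1) \<and> adapt_loop g m (k + 1) \<le> m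
      \<and> (\<forall>j\<in>{k + 1..<adapt_loop g m (k + 1)}. g j)
      \<and> (adapt_loop g m (k + 1) < m \<longrightarrow> \<not> g (adapt_loop g m (k + 1)))"
      using True "1.prems" by (intro "1.IH") auto
    have "adapt_loop g m k = adapt_loop g m (k + 1)"
      using True by (subst adapt_loop.simps) simp
    moreover have "{k..<adapt_loop g m (k + 1)} = insert k {k + 1..<adapt_loop g m (k + 1)}"
      using IH by auto
    ultimately show ?thesis
      using IH True by auto
  next
    case False
    have "adapt_loop g m k = k"
      by (subst adapt_loop.simps) (rule if_not_P[OF False])
    then show ?thesis
      using False "1.prems" by auto
  qed
qed

lemma measurable_adapt_loop:
  assumes "\<And>k. Measurable.pred M (\<lambda>\<omega>. g \<omega> k)"
  shows "(\<lambda>\<omega>. adapt_loop (g \<omega>) m k) \<in> measurable M (count_space UNIV)"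
proof (induction "Suc m - k" arbitrary: k)
  case 0
  then have "\<not> k \<le> m - 1"
    by simp
  then have "adapt_loop (g \<omega>) m k = k" for \<omega>
    by (subst adapt_loop.simps) simp
  then show ?case
    by simp
next
  case (Suc d)
  have [measurable]: "(\<lambda>\<omega>. adapt_loop (g \<omega>) m (k + 1)) \<in> measurable M (count_space UNIV)"
    using Suc by simp
  have [measurable]: "Measurable.pred M (\<lambda>\<omega>. g \<omega> k)"
    by (rule assms)
  have "(\<lambda>\<omega>. adapt_loop (g \<omega>) m k)
      = (\<lambda>\<omega>. if k \<le> m - 1 \<and> g \<omega> k then adapt_loop (g \<omega>) m (k + 1) else k)"
    by (rule ext) (rule adapt_loop.simps)
  then show ?case
    by simp
qed

end

definition windows :: "nat \<Rightarrow> (nat \<Rightarrow> nat) \<Rightarrow> nat \<Rightarrow> (nat \<Rightarrow> real) set" where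
  "windows t r m = (\<lambda>k. window_weight t (r k)) ` {1..m}
    \<union> (\<lambda>k. window_weight t (r (k + 1)) - window_weight t (r k)) ` {1..<m}"

lemma finite_windows: "finite (windows t r m)"
  unfolding windows_def by simp

lemma card_windows: "card (windows t r m) \<le> 2 * m - 1"
proof -
  have "card (windows t r m) \<le> card {1..m} + card {1..<m}"
    unfolding windows_def by (intro card_Un_le[THEN order_trans] add_mono card_image_le) auto
  then show ?thesis
    by simp
qed

lemma A_const_log_arg_gt_1:
  assumes "0 < \<delta>" "\<delta> < 1" "2 \<le> n" "1 \<le> m"
  shows "1 < (2 * real m - 1) * real n * (real n - 1) / \<delta>"
proof -
  have "2 \<le> (2 * real m - 1) * real n"
    using mult_mono[of 1 "2 * real m - 1" 2 "real n"] assms by auto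
  then have "2 \<le> (2 * real m - 1) * real n * (real n - 1)"
    using mult_mono[of 2 "(2 * real m - 1) * real n" 1 "real n - 1"] assms by auto
  then show ?thesis
    using assms by (simp add: less_divide_eq)
qed

lemma A_const_nonneg:
  assumes "0 < \<delta>" "\<delta> < 1" "2 \<le> n" "1 \<le> m"
  shows "0 \<le> A_const \<delta> n m"
  using A_const_log_arg_gt_1[OF assms] unfolding A_const_def by simp

lemma exp_A_const:
  assumes "0 < \<delta>" "\<delta> < 1" "2 \<le> n" "1 \<le> m"
  shows "exp (- (A_const \<delta> n m)\<^sup>2 / 2) = \<delta> / ((2 * real m - 1) * real n * (real n - 1))"
proof -
  define K where "K = (2 * real m - 1) * real n * (real n - 1)"
  have "1 < K / \<delta>"
    using A_const_log_arg_gt_1[OF assms] unfolding K_def .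
  then have "(A_const \<delta> n m)\<^sup>2 = 2 * ln (K / \<delta>)"
    unfolding A_const_def K_def[symmetric] by simp
  then have "exp (- (A_const \<delta> n m)\<^sup>2 / 2) = inverse (K / \<delta>)"
    using \<open>1 < K / \<delta>\<close> by (simp add: exp_minus)
  then show ?thesis
    unfolding K_def by simp
qed

locale adapt_run = labeler_sample + window_grid +
  assumes two_le_n: "2 \<le> n"
begin

lemma adapt_error_le_if_deviations_small:
  assumes "0 < \<delta>" "\<delta> < 1" "0 < \<beta>"
    and small: "\<And>w i j. w \<in> windows t r m \<Longrightarrow> i \<in> {1..n} \<Longrightarrow> j \<in> {1..n} \<Longrightarrow>
      \<bar>deviation w i j \<omega>\<bar> \<le> A_const \<delta> n m * sqrt (\<Sum>u\<in>{1..t}. (w u)\<^sup>2)"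
    and r': "r 1 \<le> r'" "r' \<le> t" "r' \<le> r m"
  shows "maxnorm n (\<lambda>i j. adapt_matrix ell X n r m \<delta> \<beta> t \<omega> i j - corr_mat ell D t i j)
    \<le> Phi r m \<beta> * (A_const \<delta> n m / sqrt (real r') + drift n (corr_mat ell D) t r')"
proof -
  define A where "A = A_const \<delta> n m"
  define Ch where "Ch k = emp_corr ell X (r k) t \<omega>" for k
  define Cb where "Cb k = window_average (corr_mat ell D) t (r k)" for k
  define kh where "kh = adapt_index ell X n r m \<delta> \<beta> t \<omega>"
  let ?test = "adapt_test ell X n r A \<beta> t \<omega>"
  have kh: "1 \<le> kh \<and> kh \<le> m \<and> (\<forall>k\<in>{1..<kh}. ?test k) \<and> (kh < m \<longrightarrow> \<not> ?test kh)"
    unfolding kh_def adapt_index_def A_def using two_le_m by (intro adapt_loop_spec) auto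
  have "maxnorm n (Ch kh - corr_mat ell D t)
      \<le> Phi r m \<beta> * (A / sqrt (real r') + drift n (corr_mat ell D) t r')"
  proof (rule oracle_inequality[where N = "maxnorm n" and Ch = Ch and Cb = Cb and kh = kh and t = t,
        OF group_seminorm_maxnorm[OF one_le_n] _ \<open>0 < \<beta>\<close> mono_drift[OF one_le_n] _ _ _ _ _ _ r'])
    show "0 \<le> A"
      unfolding A_def using assms two_le_n two_le_m by (intro A_const_nonneg) auto
    show "maxnorm n (Ch k - Cb k) \<le> A / sqrt (real (r k))" if "k \<in> {1..m}" "r k \<le> t" for k
    proof -
      have w: "window_weight t (r k) \<in> windows t r m"
        using that(1) unfolding windows_def by blast
      show ?thesis
        unfolding Ch_def Cb_def A_def using small[OF w] r_positive[OF that(1)] that(2)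
        by (intro window_noise_le) auto
    qed
    show "maxnorm n ((Ch (k + 1) - Ch k) - (Cb (k + 1) - Cb k))
        \<le> A * sqrt ((1 - real (r k) / real (r (k + 1))) / real (r k))"
      if "k \<in> {1..<m}" "r (k + 1) \<le> t" for k
    proof -
      have w: "window_weight t (r (k + 1)) - window_weight t (r k) \<in> windows t r m"
        using that(1) unfolding windows_def by blast
      show ?thesis
        unfolding Ch_def Cb_def A_def using small[OF w] r_positive[of k] r_step[OF that(1)] that
        by (intro window_step_noise_le) auto
    qed
    show "maxnorm n (Cb k - corr_mat ell D t) \<le> drift n (corr_mat ell D) t (r k)"
      if "k \<in> {1..m}" "r k \<le> t" for k
      unfolding Cb_def using r_positive[OF that(1)] that(2) by (intro window_average_drift one_le_n) auto
    show "kh \<in> {1..m}"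
      using kh by auto
    show "maxnorm n (Ch (k + 1) - Ch k)
        \<le> A * (2 * \<beta> / sqrt (real (r k)) + sqrt ((1 - real (r k) / real (r (k + 1))) / real (r k)))"
      if "k \<in> {1..<kh}" for k
      using kh that unfolding Ch_def adapt_test_def maxnorm_minus by auto
    show "\<not> maxnorm n (Ch (kh + 1) - Ch kh)
        \<le> A * (2 * \<beta> / sqrt (real (r kh)) + sqrt ((1 - real (r kh) / real (r (kh + 1))) / real (r kh)))"
      if "kh < m" "r (kh + 1) \<le> t"
      using kh that unfolding Ch_def adapt_test_def maxnorm_minus by auto
  qed
  then show ?thesis
    unfolding Ch_def kh_def adapt_matrix_def maxnorm_minus A_def .
qed

lemma adapt_error_le_Min_if_deviations_small:
  assumes "0 < \<delta>" "\<delta> < 1" "0 < \<beta>" "r 1 \<le> t"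
    and small: "\<And>w i j. w \<in> windows t r m \<Longrightarrow> i \<in> {1..n} \<Longrightarrow> j \<in> {1..n} \<Longrightarrow>
      \<bar>deviation w i j \<omega>\<bar> \<le> A_const \<delta> n m * sqrt (\<Sum>u\<in>{1..t}. (w u)\<^sup>2)"
  shows "maxnorm n (\<lambda>i j. adapt_matrix ell X n r m \<delta> \<beta> t \<omega> i j - corr_mat ell D t i j)
    \<le> Phi r m \<beta> * Min ((\<lambda>r'. A_const \<delta> n m / sqrt (real r') + drift n (corr_mat ell D) t r')
      ` {r 1..min t (r m)})"
proof -
  define bound where "bound r' = A_const \<delta> n m / sqrt (real r') + drift n (corr_mat ell D) t r'" for r'
  have "{r 1..min t (r m)} \<noteq> {}"
    using \<open>r 1 \<le> t\<close> r_mono[of 1 m] two_le_m by auto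
  then have "Min (bound ` {r 1..min t (r m)}) \<in> bound ` {r 1..min t (r m)}"
    by (intro Min_in) auto
  then obtain r' where "r' \<in> {r 1..min t (r m)}" "Min (bound ` {r 1..min t (r m)}) = bound r'"
    by auto
  then show ?thesis
    using adapt_error_le_if_deviations_small[OF assms(1-3) small] unfolding bound_def by auto
qed

lemma sets_adapt_error_le:
  "{\<omega> \<in> space M. maxnorm n (\<lambda>i j. adapt_matrix ell X n r m \<delta> \<beta> t \<omega> i j - corr_mat ell D t i j) \<le> c}
    \<in> sets M"
proof -
  have [measurable]: "(\<lambda>\<omega>. maxnorm n (\<lambda>i j. emp_corr ell X a t \<omega> i j - emp_corr ell X b t \<omega> i j))
      \<in> borel_measurable M" for a b
    by (intro borel_measurable_maxnorm borel_measurable_diff borel_measurable_emp_corr)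
  have "Measurable.pred M (\<lambda>\<omega>. adapt_test ell X n r A \<beta> t \<omega> k)" for A k
    unfolding adapt_test_def by measurable
  then have index: "(\<lambda>\<omega>. adapt_index ell X n r m \<delta> \<beta> t \<omega>) \<in> measurable M (count_space UNIV)"
    unfolding adapt_index_def by (rule measurable_adapt_loop)
  have "(\<lambda>\<omega>. maxnorm n (\<lambda>i j. emp_corr ell X (r k) t \<omega> i j - corr_mat ell D t i j))
      \<in> borel_measurable M" for k
    by (intro borel_measurable_maxnorm borel_measurable_diff borel_measurable_emp_corr
        borel_measurable_const)
  then have [measurable]: "(\<lambda>\<omega>. maxnorm n (\<lambda>i j. adapt_matrix ell X n r m \<delta> \<beta> t \<omega> i j
      - corr_mat ell D t i j)) \<in> borel_measurable M"
    unfolding adapt_matrix_def by (rule measurable_compose_countable[OF _ index])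
  show ?thesis
    by measurable
qed

lemma prob_large_window_deviation:
  assumes "0 < \<delta>" "\<delta> < 1"
  shows "prob {\<omega> \<in> space M. \<exists>w\<in>windows t r m. \<exists>i\<in>{1..n}. \<exists>j\<in>{1..n}.
    \<bar>deviation w i j \<omega>\<bar> > A_const \<delta> n m * sqrt (\<Sum>u\<in>{1..t}. (w u)\<^sup>2)} \<le> \<delta>"
proof -
  define K where "K = (2 * real m - 1) * real n * (real n - 1)"
  have "1 \<le> m"
    using two_le_m by simp
  have "1 < K / \<delta>"
    using A_const_log_arg_gt_1[OF assms two_le_n \<open>1 \<le> m\<close>] unfolding K_def .
  then have "0 < K"
    using \<open>0 < \<delta>\<close> by (simp add: less_divide_eq)
  have "real (card (windows t r m) * (n * (n - 1))) \<le> real ((2 * m - 1) * (n * (n - 1)))"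
    using card_windows by (intro of_nat_mono mult_right_mono) auto
  also have "\<dots> = K"
    unfolding K_def using two_le_m two_le_n by (simp add: of_nat_diff)
  finally have card_le: "real (card (windows t r m) * (n * (n - 1))) \<le> K" .
  have "prob {\<omega> \<in> space M. \<exists>w\<in>windows t r m. \<exists>i\<in>{1..n}. \<exists>j\<in>{1..n}.
      \<bar>deviation w i j \<omega>\<bar> > A_const \<delta> n m * sqrt (\<Sum>u\<in>{1..t}. (w u)\<^sup>2)}
    \<le> real (card (windows t r m) * (n * (n - 1))) * exp (- (A_const \<delta> n m)\<^sup>2 / 2)"
    using assms two_le_n two_le_m by (intro prob_large_deviation finite_windows A_const_nonneg) auto
  also have "\<dots> \<le> K * (\<delta> / K)"
    unfolding exp_A_const[OF assms two_le_n \<open>1 \<le> m\<close>] K_def[symmetric]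
    using card_le assms \<open>0 < K\<close> by (intro mult_right_mono) auto
  also have "\<dots> = \<delta>"
    using \<open>0 < K\<close> by simp
  finally show ?thesis .
qed

end

theorem lemma2:
  fixes M :: "'m measure"
    and X :: "nat \<Rightarrow> 'm \<Rightarrow> real ^ 'd"
    and D :: "nat \<Rightarrow> (real ^ 'd) measure"
    and y :: "real ^ 'd \<Rightarrow> real"
    and ell :: "nat \<Rightarrow> real ^ 'd \<Rightarrow> real"
    and n m t :: nat and r :: "nat \<Rightarrow> nat"
    and \<delta> \<beta> \<tau> :: real
  assumes M: "prob_space M"
    and D_prob: "\<And>k. k \<ge> 1 \<Longrightarrow> prob_space (D k)"
    and D_sets: "\<And>k. k \<ge> 1 \<Longrightarrow> sets (D k) = sets borel"
    and y_meas: "y \<in> borel_measurable borel"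
    and y_val: "\<And>x. y x \<in> {-1, 1}"
    and ell_meas: "\<And>i. i \<in> {1..n} \<Longrightarrow> ell i \<in> borel_measurable borel"
    and ell_val: "\<And>i x. i \<in> {1..n} \<Longrightarrow> ell i x \<in> {-1, 1}"
    and A1: "\<And>t'. distr M (PiM {1..t'} D) (\<lambda>\<omega>. \<lambda>k\<in>{1..t'}. X k \<omega>) = PiM {1..t'} D"
    and A2: "\<And>t' i j c. t' \<ge> 1 \<Longrightarrow> i \<in> {1..n} \<Longrightarrow> j \<in> {1..n} \<Longrightarrow> i \<noteq> j \<Longrightarrow> c \<in> {-1, 1} \<Longrightarrow>
               measure (D t') {x. ell i x \<noteq> y x \<and> ell j x \<noteq> y x \<and> y x = c} * measure (D t') {x. y x = c}
             = measure (D t') {x. ell i x \<noteq> y x \<and> y x = c} * measure (D t') {x. ell j x \<noteq> y x \<and> y x = c}"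
    and tau: "\<tau> > 0"
    and A3: "\<And>t' i. t' \<ge> 1 \<Longrightarrow> i \<in> {1..n} \<Longrightarrow> measure (D t') {x. ell i x = y x} \<ge> 1 / 2 + \<tau>"
    and n3: "n \<ge> 3"
    and delta: "0 < \<delta>" "\<delta> < 1"
    and beta: "\<beta> > 0"
    and m2: "m \<ge> 2"
    and r_pos: "r 1 > 0"
    and r_mono: "\<And>k. k \<in> {1..<m} \<Longrightarrow> r k < r (k + 1)"
    and t_ge: "t \<ge> r 1"
  shows "prob_space.prob M {\<omega> \<in> space M.
           maxnorm n (\<lambda>i j. adapt_matrix ell X n r m \<delta> \<beta> t \<omega> i j - corr_mat ell D t i j)
           \<le> Phi r m \<beta> *
              Min ((\<lambda>r'. A_const \<delta> n m / sqrt (real r')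
                      + (\<Sum>u = t - r' + 1..t - 1.
                           maxnorm n (\<lambda>i j. corr_mat ell D u i j - corr_mat ell D (u + 1) i j)))
                   ` {r 1..min t (r m)})}
         \<ge> 1 - \<delta>"
proof -
  interpret adapt_run M X D ell n t r m
  proof (intro adapt_run.intro labeler_sample.intro window_grid.intro adapt_run_axioms.intro)
    show "1 \<le> n" "2 \<le> n"
      using n3 by auto
    show "1 \<le> t"
      using t_ge r_pos by simp
  qed (fact M D_prob D_sets ell_meas ell_val A1 m2 r_pos r_mono)+
  let ?large = "{\<omega> \<in> space M. \<exists>w\<in>windows t r m. \<exists>i\<in>{1..n}. \<exists>j\<in>{1..n}.
    \<bar>deviation w i j \<omega>\<bar> > A_const \<delta> n m * sqrt (\<Sum>u\<in>{1..t}. (w u)\<^sup>2)}"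
  let ?good = "{\<omega> \<in> space M.
    maxnorm n (\<lambda>i j. adapt_matrix ell X n r m \<delta> \<beta> t \<omega> i j - corr_mat ell D t i j)
    \<le> Phi r m \<beta> * Min ((\<lambda>r'. A_const \<delta> n m / sqrt (real r') + drift n (corr_mat ell D) t r')
      ` {r 1..min t (r m)})}"
  have large: "?large \<in> sets M"
    by (intro sets_large_deviation finite_windows)
  have "space M - ?large \<subseteq> ?good"
    using adapt_error_le_Min_if_deviations_small[OF delta beta t_ge] by (auto simp: not_less)
  then have "prob (space M - ?large) \<le> prob ?good"
    by (intro finite_measure_mono sets_adapt_error_le)
  moreover have "prob (space M - ?large) \<ge> 1 - \<delta>"
    using prob_compl[OF large] prob_large_window_deviation[OF delta] by simp
  ultimately show ?thesis
    unfolding drift_def by simp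
qed

end
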